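(* Let $k\in\mathbb{N}_0$, $n=2k+1$, $a<b$, $v\in\mathbb{R}$ constant, and $T>0$. For integers $N\ge1$ let $h=(b-a)/N$ and grid points $x_j=a+jh$. Consider the periodic advection equation $\phi_t+v\phi_x=0$ on $[a,b]$ with periodic boundary conditions and $(b-a)$-periodic initial condition $\phi_{IC}\in C^{k+1}$ (extended periodically). Define the jet scheme $\phi_0=\phi_{IC}$, $\phi_{m+1}=P_k^+(A\phi_m)$, where $(A\phi)(x)=\phi(x-v\Delta t)$ (periodic shift) and $P_k^+$ is the periodic piecewise degree-$n$ Hermite interpolation on the grid $\{x_j\}$ using derivatives up to order $k$ at grid points. Assume the time step satisfies $\Delta t\ge c\,h^{k+1}$ for a constant $c>0$ independent of $h$. Then there is a constant $M$, depending on $k,a,b,v,T,c,\phi_{IC}$ but not on $h$ (or $N$) or $m$, such that for all $m$ with $0\le m\Delta t\le T$: $$\|\phi_m^{(\ell)}\|_{L^\infty(a,b)}\le M\ \ (0\le\ell\le k),\qquad \|\phi_m^{(k+1)}\|_{L^2(a,b)}\le M.$$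
   Context: $f^{(\ell)}$ denotes the $\ell$-th derivative; for the piecewise polynomial $\phi_m$ (which is $C^k$ and periodic), $\phi_m^{(k+1)}$ is defined cellwise. The periodic Hermite interpolation $P_k^+g$ of a $(b-a)$-periodic $C^k$ function $g$ is the function which on each cell $[x_j,x_{j+1}]$ equals the polynomial of degree $\le n$ matching $g^{(\ell)}(x_j)$ and $g^{(\ell)}(x_{j+1})$ for $\ell=0,\dots,k$. *)

theory Defs
  imports "HOL-Analysis.Analysis" "HOL-Computational_Algebra.Polynomial"
begin

definition hermite_poly :: "nat \<Rightarrow> real \<Rightarrow> real \<Rightarrow> (nat \<Rightarrow> real) \<Rightarrow> (nat \<Rightarrow> real) \<Rightarrow> real poly" where
  "hermite_poly k x0 x1 ys0 ys1 =
     (THE p. degree p \<le> 2 * k + 1 \<and>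
        (\<forall>l\<le>k. poly ((pderiv ^^ l) p) x0 = ys0 l \<and> poly ((pderiv ^^ l) p) x1 = ys1 l))"

definition grid_pt :: "real \<Rightarrow> real \<Rightarrow> nat \<Rightarrow> int \<Rightarrow> real" where
  "grid_pt a b N j = a + of_int j * ((b - a) / real N)"

definition hermite_interp :: "nat \<Rightarrow> real \<Rightarrow> real \<Rightarrow> nat \<Rightarrow> (real \<Rightarrow> real) \<Rightarrow> real \<Rightarrow> real" where
  "hermite_interp k a b N g x =
     (let j = \<lfloor>(x - a) / ((b - a) / real N)\<rfloor>;
          xl = grid_pt a b N j; xr = grid_pt a b N (j + 1)
      in poly (hermite_poly k xl xr (\<lambda>l. (deriv ^^ l) g xl) (\<lambda>l. (deriv ^^ l) g xr)) x)"

primrec jet_scheme :: "nat \<Rightarrow> real \<Rightarrow> real \<Rightarrow> nat \<Rightarrow> real \<Rightarrow> real \<Rightarrow> (real \<Rightarrow> real) \<Rightarrow> nat \<Rightarrow> real \<Rightarrow> real" where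
  "jet_scheme k a b N v dt phiIC 0 = phiIC"
| "jet_scheme k a b N v dt phiIC (Suc m) =
     hermite_interp k a b N (\<lambda>x. jet_scheme k a b N v dt phiIC m (x - v * dt))"

end

theory Submission
  imports Defs "HOL-Computational_Algebra.Polynomial_Factorial" "HOL-Computational_Algebra.Field_as_Ring"
begin

(* Write E(f) for the squared L2 norm of the (k+1)-st derivative over one period [a,b].
   One step of the scheme is a periodic shift followed by piecewise Hermite interpolation P.
   The shift changes neither E nor the mean of the function.  On every cell the derivative
   (Pg)^(k+1) is the (k+1)-st derivative of a polynomial of degree 2k+1, and integrating by
   parts k+1 times (the interpolation error vanishes to order k at both cell ends) shows that
   it is L2-orthogonal to the error (g - Pg)^(k+1).  By Pythagoras E(Pg) <= E(g), and the
   same vanishing endpoint data give |mean(Pg) - mean(g)| <= h^(k+1) (E(g) + L)/2.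
   Since dt >= c h^(k+1), at most T/(c h^(k+1)) steps are taken, so energy and mean stay
   bounded independently of h.  A Poincare-type chain (each derivative of order >= 1 of a
   periodic function vanishes somewhere in a period) turns these two quantities into sup
   bounds for all derivatives up to order k. *)


section \<open>Two-point Hermite interpolation by polynomials\<close>

lemma higher_pderiv_diff: "(pderiv ^^ l) (p - q) = (pderiv ^^ l) p - (pderiv ^^ l) (q::real poly)"
  by (induction l) (simp_all add: pderiv_diff)

lemma higher_pderivs_vanish_if_dvd:
  assumes "[:-x,1:]^(Suc k) dvd (q::real poly)" "l \<le> k"
  shows "poly ((pderiv ^^ l) q) x = 0"
proof -
  have "(pderiv ^^ l) q = 0 \<or> Suc k - l \<le> order x ((pderiv ^^ l) q)"
    using assms(2)
  proof (induction l)
    case 0 then show ?case using assms(1) order_divides[of x "Suc k" q] by simp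
  next
    case (Suc l)
    show ?case
    proof (cases "(pderiv ^^ l) q = 0")
      case False
      with Suc have ord: "Suc k - l \<le> order x ((pderiv ^^ l) q)" by simp
      with Suc.prems have "poly ((pderiv ^^ l) q) x = 0" using order_root by fastforce
      from order_pderiv[OF False this] ord Suc.prems show ?thesis by (simp add: Suc_diff_le)
    qed simp
  qed
  with assms(2) show ?thesis using order_root by fastforce
qed

lemma dvd_if_higher_pderivs_vanish:
  assumes "\<forall>l\<le>k. poly ((pderiv ^^ l) (q::real poly)) x = 0"
  shows "[:-x,1:]^(Suc k) dvd q"
  using assms
proof (induction k arbitrary: q)
  case 0 then show ?case by (simp add: poly_eq_0_iff_dvd)
next
  case (Suc k)
  have "\<forall>l\<le>k. poly ((pderiv ^^ l) (pderiv q)) x = 0"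
    using Suc.prems by (metis Suc_le_mono funpow_Suc_right o_apply)
  from Suc.IH[OF this] have d: "pderiv q = 0 \<or> Suc k \<le> order x (pderiv q)"
    by (metis order_divides)
  have root: "poly q x = 0" using Suc.prems by (metis funpow_0 le0)
  show ?case
  proof (cases "q = 0")
    case False
    have "pderiv q \<noteq> 0"
    proof
      assume "pderiv q = 0"
      then obtain c where "q = [:c:]" by (metis degree_eq_zeroE pderiv_eq_0_iff)
      with root False show False by simp
    qed
    with d order_pderiv[OF False root] have "Suc (Suc k) \<le> order x q" by simp
    then show ?thesis by (metis order_divides)
  qed simp
qed

lemma hermite_vanishing_data:
  assumes "x0 \<noteq> x1" "degree (q::real poly) \<le> 2*k+1"
    "\<forall>l\<le>k. poly ((pderiv ^^ l) q) x0 = 0" "\<forall>l\<le>k. poly ((pderiv ^^ l) q) x1 = 0"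
  shows "q = 0"
proof (rule ccontr)
  assume q: "q \<noteq> 0"
  from dvd_if_higher_pderivs_vanish[OF assms(3)] obtain r where r: "q = [:-x0,1:]^(Suc k) * r"
    by (auto elim: dvdE)
  with q have r0: "r \<noteq> 0" by auto
  from dvd_if_higher_pderivs_vanish[OF assms(4)] q have o1: "Suc k \<le> order x1 q" by (metis order_divides)
  have "poly ([:-x0,1:]^(Suc k)) x1 \<noteq> 0" using assms(1) by simp
  hence "order x1 ([:-x0,1:]^(Suc k)) = 0" by (rule order_0I)
  with o1 order_mult[of "[:-x0,1:]^(Suc k)" r x1] q r have "Suc k \<le> order x1 r" by simp
  hence "[:-x1,1:]^(Suc k) dvd r" by (metis order_divides)
  hence "Suc k \<le> degree r" using dvd_imp_degree_le[OF _ r0] by (metis degree_linear_power)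
  moreover have "degree q = Suc k + degree r"
    using r r0 by (simp add: degree_mult_eq degree_linear_power del: power_Suc)
  ultimately show False using assms(2) by simp
qed

lemma higher_pderiv_pcompose_lin:
  "(pderiv ^^ l) (pcompose p [:c,1::real:]) = pcompose ((pderiv ^^ l) p) [:c,1:]"
  by (induction l) (simp_all add: pderiv_pcompose pderiv_pCons)

definition taylor_poly :: "nat \<Rightarrow> real \<Rightarrow> (nat \<Rightarrow> real) \<Rightarrow> real poly" where
  "taylor_poly k x ys = pcompose (\<Sum>i\<le>k. monom (ys i / fact i) i) [:-x,1:]"

lemma taylor_poly_degree: "degree (taylor_poly k x ys) \<le> k"
proof -
  have "degree (\<Sum>i\<le>k. monom (ys i / fact i) i) \<le> k"
    by (rule degree_sum_le) (auto intro: order_trans[OF degree_monom_le])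
  then show ?thesis
    unfolding taylor_poly_def
    using degree_pcompose_le[of "\<Sum>i\<le>k. monom (ys i / fact i) i" "[:-x,1:]"] by simp
qed

lemma taylor_poly_higher_pderiv:
  assumes "l \<le> k" shows "poly ((pderiv ^^ l) (taylor_poly k x ys)) x = ys l"
proof -
  let ?P = "(\<Sum>i\<le>k. monom (ys i / fact i) i)"
  have "poly ((pderiv ^^ l) (taylor_poly k x ys)) x = poly ((pderiv ^^ l) ?P) 0"
    unfolding taylor_poly_def higher_pderiv_pcompose_lin by (simp add: poly_pcompose)
  also have "\<dots> = pochhammer 1 l * coeff ?P l" by (simp add: poly_0_coeff_0 coeff_higher_pderiv)
  also have "coeff ?P l = ys l / fact l" using assms by (simp add: coeff_sum)
  finally show ?thesis by (simp add: pochhammer_fact[symmetric])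
qed

text \<open>Existence: glue the two Taylor polynomials with a Bezout identity for the coprime
  polynomials \<open>(X - x0)^(k+1)\<close> and \<open>(X - x1)^(k+1)\<close>.\<close>

lemma hermite_exists:
  assumes "x0 \<noteq> (x1::real)"
  shows "\<exists>p. degree p \<le> 2*k+1 \<and>
    (\<forall>l\<le>k. poly ((pderiv ^^ l) p) x0 = ys0 l \<and> poly ((pderiv ^^ l) p) x1 = ys1 l)"
proof -
  define A0 where "A0 = taylor_poly k x0 ys0"
  define A1 where "A1 = taylor_poly k x1 ys1"
  define W where "W = [:-x0,1:]^(Suc k)"
  define Q where "Q = [:-x1,1:]^(Suc k)"
  have coprime_linear: "coprime [:-x0,1:] [:-x1,1::real:]"
  proof (rule coprimeI)
    fix c assume "c dvd [:-x0,1:]" "c dvd [:-x1,1::real:]"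
    then have "c dvd [:-x0,1:] - [:-x1,1:]" by (rule dvd_diff)
    then have cd: "c dvd [:x1-x0:]" by simp
    have nz: "[:x1 - x0:] \<noteq> 0" using assms by simp
    from cd nz have "c \<noteq> 0" by auto
    with dvd_imp_degree_le[OF cd nz] show "is_unit c" by (simp add: is_unit_iff_degree)
  qed
  then have "coprime W Q" unfolding W_def Q_def by (simp del: power_Suc)
  then obtain u t where ut: "u * W + t * Q = 1"
    using bezout_coefficients_fst_snd[of W Q] coprime_imp_gcd_eq_1 by metis
  define r where "r = ((A1 - A0) * u) mod Q"
  define p where "p = A0 + W * r"
  have Q0: "Q \<noteq> 0" unfolding Q_def by (simp del: power_Suc)
  have degr: "degree r \<le> k"
  proof (cases "r = 0")
    case False
    then have "degree r < degree Q" unfolding r_def using degree_mod_less'[OF Q0] by simp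
    then show ?thesis unfolding Q_def by (simp add: degree_linear_power del: power_Suc)
  qed simp
  have "degree (W * r) \<le> 2*k+1"
    using degree_mult_le[of W r] degr unfolding W_def by (simp add: degree_linear_power del: power_Suc)
  moreover have "degree A0 \<le> 2*k+1" unfolding A0_def using taylor_poly_degree[of k x0 ys0] by simp
  ultimately have degp: "degree p \<le> 2*k+1" unfolding p_def by (rule degree_add_le[rotated])
  have d0: "[:-x0,1:]^(Suc k) dvd p - A0" unfolding p_def W_def by simp
  have "p - A1 = Q * ((A0 - A1) * t - W * ((A1 - A0) * u div Q))"
  proof -
    have e: "(A1 - A0) * u = Q * ((A1 - A0) * u div Q) + r" unfolding r_def by simp
    have "p - A1 = (A0 - A1) * (u * W + t * Q) + W * r" unfolding p_def using ut by simp
    also have "\<dots> = (A0 - A1) * t * Q - W * ((A1 - A0) * u) + W * r"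
      by (simp add: algebra_simps)
    also have "\<dots> = Q * ((A0 - A1) * t - W * ((A1 - A0) * u div Q))"
      by (subst e) (simp add: algebra_simps)
    finally show ?thesis .
  qed
  hence d1: "[:-x1,1:]^(Suc k) dvd p - A1" unfolding Q_def by simp
  have "poly ((pderiv ^^ l) p) x0 = ys0 l \<and> poly ((pderiv ^^ l) p) x1 = ys1 l" if l: "l \<le> k" for l
    using higher_pderivs_vanish_if_dvd[OF d0 l] higher_pderivs_vanish_if_dvd[OF d1 l]
      taylor_poly_higher_pderiv[OF l] unfolding A0_def A1_def by (simp add: higher_pderiv_diff)
  with degp show ?thesis by blast
qed

lemma hermite_ex1:
  assumes "x0 \<noteq> (x1::real)"
  shows "\<exists>!p. degree p \<le> 2*k+1 \<and>
    (\<forall>l\<le>k. poly ((pderiv ^^ l) p) x0 = ys0 l \<and> poly ((pderiv ^^ l) p) x1 = ys1 l)"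
proof -
  from hermite_exists[OF assms] obtain p where p: "degree p \<le> 2*k+1 \<and>
      (\<forall>l\<le>k. poly ((pderiv ^^ l) p) x0 = ys0 l \<and> poly ((pderiv ^^ l) p) x1 = ys1 l)" by blast
  show ?thesis
  proof (rule ex1I[of _ p])
    fix q assume q: "degree q \<le> 2*k+1 \<and>
      (\<forall>l\<le>k. poly ((pderiv ^^ l) q) x0 = ys0 l \<and> poly ((pderiv ^^ l) q) x1 = ys1 l)"
    have "q - p = 0"
      by (rule hermite_vanishing_data[OF assms, of _ k])
        (use p q in \<open>auto simp: higher_pderiv_diff intro: degree_diff_le\<close>)
    then show "q = p" by simp
  qed (rule p)
qed

lemma hermite_poly_interpolates:
  assumes "x0 \<noteq> (x1::real)"
  shows "degree (hermite_poly k x0 x1 ys0 ys1) \<le> 2*k+1 \<and>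
     (\<forall>l\<le>k. poly ((pderiv ^^ l) (hermite_poly k x0 x1 ys0 ys1)) x0 = ys0 l \<and>
        poly ((pderiv ^^ l) (hermite_poly k x0 x1 ys0 ys1)) x1 = ys1 l)"
  unfolding hermite_poly_def by (rule theI'[OF hermite_ex1[OF assms]])

lemma hermite_poly_eqI:
  assumes "x0 \<noteq> (x1::real)" "degree q \<le> 2*k+1"
    "\<forall>l\<le>k. poly ((pderiv ^^ l) q) x0 = ys0 l \<and> poly ((pderiv ^^ l) q) x1 = ys1 l"
  shows "hermite_poly k x0 x1 ys0 ys1 = q"
  unfolding hermite_poly_def by (rule the1_equality[OF hermite_ex1[OF assms(1)]]) (use assms in simp)

lemma higher_pderiv_above_degree:
  assumes "degree (p::real poly) < n"
  shows "(pderiv ^^ n) p = 0"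
proof (rule poly_eqI)
  fix i
  have "coeff p (i + n) = 0" using assms by (intro coeff_eq_0) simp
  then show "coeff ((pderiv ^^ n) p) i = coeff 0 i" by (simp add: coeff_higher_pderiv)
qed


section \<open>General facts from real calculus\<close>

lemma higher_deriv_shift: "(deriv ^^ l) (\<lambda>x. f (x + t)) = (\<lambda>x. (deriv ^^ l) f (x + (t::real)))"
proof (induction l)
  case (Suc l)
  have "deriv (\<lambda>x. F (x + t)) y = deriv F (y + t)" for F :: "real \<Rightarrow> real" and y
    unfolding deriv_def using DERIV_shift[of F _ y t] by simp
  then show ?case by (simp add: Suc)
qed simp

lemma higher_deriv_shift_minus: "(deriv ^^ l) (\<lambda>x. f (x - s)) = (\<lambda>x. (deriv ^^ l) f (x - (s::real)))"
  using higher_deriv_shift[of l f "-s"] by simp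

lemma periodic_higher_deriv:
  assumes "\<forall>x. f (x + L) = (f x::real)"
  shows "(deriv ^^ l) f (x + L) = (deriv ^^ l) f x"
proof -
  have "(\<lambda>x. f (x + L)) = f" using assms by auto
  then show ?thesis using higher_deriv_shift[of l f L] by metis
qed

lemma periodic_derivative_has_zero:
  fixes F F' :: "real \<Rightarrow> real"
  assumes ab: "a < b" and per: "F b = F a" and der: "\<And>x. (F has_real_derivative F' x) (at x)"
  shows "\<exists>z\<in>{a..b}. F' z = 0"
proof -
  from MVT2[OF ab, of F F'] der
  obtain z where "a < z" "z < b" "F b - F a = (b - a) * F' z" by blast
  with per ab show ?thesis by auto
qed

lemma has_real_derivative_from_both_sides:
  fixes F :: "real \<Rightarrow> real"
  assumes "(F has_real_derivative D) (at x within {c..x})" "(F has_real_derivative D) (at x within {x..d})"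
    and "c < x" "x < d"
  shows "(F has_real_derivative D) (at x)"
proof -
  have "((\<lambda>y. (F y - F x) / (y - x)) \<longlongrightarrow> D) (sup (at x within {c..x}) (at x within {x..d}))"
    using assms(1,2) unfolding has_field_derivative_iff by (rule filterlim_sup)
  also have "sup (at x within {c..x}) (at x within {x..d}) = at x within {c..d}"
    by (metis at_within_union ivl_disj_un_two_touch(4) assms(3,4) less_imp_le)
  also have "\<dots> = at x" using assms(3,4) by (rule at_within_Icc_at)
  finally show ?thesis unfolding has_field_derivative_iff .
qed

lemma has_real_derivative_within_poly:
  assumes "\<forall>y\<in>{c..d}. F y = poly q y" "x \<in> {c..d}"
  shows "(F has_real_derivative poly (pderiv q) x) (at x within {c..d})"
proof -
  have "(poly q has_real_derivative poly (pderiv q) x) (at x within {c..d})"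
    using poly_DERIV[of q x] by (rule has_field_derivative_at_within)
  then show ?thesis
    by (rule has_field_derivative_transform_within[of _ _ _ _ 1]) (use assms in auto)
qed

lemma periodic_integral:
  fixes w :: "real \<Rightarrow> real"
  assumes L: "L > 0" and per: "\<forall>x. w (x + L) = w x" and int: "\<And>c d. w integrable_on {c..d}"
  shows "integral {c..c+L} w = integral {d..d+L} w"
proof -
  define G where "G x = integral {x..x+L} w" for x
  have per_nat: "w (x + real n * L) = w x" for x n
  proof (induction n)
    case (Suc n)
    have "x + real (Suc n) * L = (x + real n * L) + L" by (simp add: algebra_simps)
    then show ?case using per Suc by metis
  qed simp
  have per_int: "w (x + of_int n * L) = w x" for x n
  proof (cases "n \<ge> 0")
    case True then show ?thesis using per_nat[of x "nat n"] by simp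
  next
    case False then show ?thesis using per_nat[of "x + of_int n * L" "nat (-n)"] by simp
  qed
  have shift: "G (x + of_int n * L) = G x" for x n
  proof -
    have "w \<circ> (+) (of_int n * L) = w" using per_int by (auto simp: add.commute)
    then show ?thesis
      unfolding G_def using integral_shift_Icc_real[of x "x + L" w "of_int n * L"]
      by (simp add: algebra_simps)
  qed
  have within_period: "G x = G y" if "x \<le> y" "y \<le> x + L" for x y
  proof -
    have "G x = integral {x..y} w + integral {y..x+L} w" unfolding G_def
      using Henstock_Kurzweil_Integration.integral_combine[of x y "x+L" w] that int by simp
    moreover have "G y = integral {y..x+L} w + integral {x+L..y+L} w" unfolding G_def
      using Henstock_Kurzweil_Integration.integral_combine[of y "x+L" "y+L" w] that int by simp
    moreover have "integral {x+L..y+L} w = integral {x..y} w"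
      using shift[of x 1] shift[of y 1] Henstock_Kurzweil_Integration.integral_combine int that L
      using integral_shift_Icc_real[of x y w L] per by (simp add: o_def add.commute)
    ultimately show ?thesis by simp
  qed
  define n where "n = \<lceil>(c - d) / L\<rceil>"
  have "c \<le> d + of_int n * L" "d + of_int n * L \<le> c + L"
  proof -
    have "(c - d) / L \<le> of_int n" "of_int n < (c - d) / L + 1" unfolding n_def by linarith+
    then show "c \<le> d + of_int n * L" "d + of_int n * L \<le> c + L" using L by (simp_all add: field_simps)
  qed
  then have "G c = G (d + of_int n * L)" by (rule within_period)
  then show ?thesis using shift unfolding G_def by simp
qed

lemma periodic_integral_shift:
  fixes w :: "real \<Rightarrow> real"
  assumes ab: "a < b" and per: "\<forall>x. w (x + (b - a)) = w x" and int: "\<And>c d. w integrable_on {c..d}"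
  shows "integral {a..b} (\<lambda>x. w (x - s)) = integral {a..b} w"
proof -
  have "integral {a..b} (\<lambda>x. w (x - s)) = integral {a + -s..b + -s} w"
    using integral_shift_Icc_real[of a b w "-s"] by (simp add: o_def)
  also have "\<dots> = integral {(a - s)..(a - s) + (b - a)} w" by simp
  also have "\<dots> = integral {a..a + (b - a)} w"
    by (rule periodic_integral) (use ab per int in auto)
  finally show ?thesis by simp
qed

text \<open>This is the regularity of the
  \<open>(k+1)\<close>-st derivative of a piecewise polynomial, and it suffices for integrability.\<close>

definition cellwise :: "real \<Rightarrow> real \<Rightarrow> (real \<Rightarrow> real) \<Rightarrow> bool" where
  "cellwise \<sigma> h u \<longleftrightarrow> (\<forall>j::int. \<exists>q. continuous_on {\<sigma> + real_of_int j*h .. \<sigma> + (real_of_int j+1)*h} q \<and>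
      (\<forall>x\<in>{\<sigma> + real_of_int j*h <..< \<sigma> + (real_of_int j+1)*h}. u x = q x))"

lemma cellwise_cont: "continuous_on UNIV u \<Longrightarrow> cellwise \<sigma> h u"
  unfolding cellwise_def by (auto intro: continuous_on_subset)

lemma cellwise_combine:
  assumes "cellwise \<sigma> h u" "cellwise \<sigma> h w"
    and F: "\<And>(S::real set) q1 q2. continuous_on S q1 \<Longrightarrow> continuous_on S q2 \<Longrightarrow> continuous_on S (\<lambda>x. F (q1 x) (q2 x))"
  shows "cellwise \<sigma> h (\<lambda>x. F (u x) (w x))"
  unfolding cellwise_def
proof
  fix j :: int
  let ?C = "{\<sigma> + real_of_int j*h .. \<sigma> + (real_of_int j+1)*h}"
  let ?O = "{\<sigma> + real_of_int j*h <..< \<sigma> + (real_of_int j+1)*h}"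
  from assms(1,2) obtain q1 q2 where q1: "continuous_on ?C q1" "\<forall>x\<in>?O. u x = q1 x"
      and q2: "continuous_on ?C q2" "\<forall>x\<in>?O. w x = q2 x"
    unfolding cellwise_def by meson
  have "continuous_on ?C (\<lambda>x. F (q1 x) (q2 x))" using q1(1) q2(1) by (rule F)
  with q1(2) q2(2) show "\<exists>q. continuous_on ?C q \<and> (\<forall>x\<in>?O. F (u x) (w x) = q x)" by auto
qed

lemma cellwise_mult: "cellwise \<sigma> h u \<Longrightarrow> cellwise \<sigma> h w \<Longrightarrow> cellwise \<sigma> h (\<lambda>x. u x * w x)"
  by (rule cellwise_combine) (auto intro: continuous_intros)

lemma cellwise_diff: "cellwise \<sigma> h u \<Longrightarrow> cellwise \<sigma> h w \<Longrightarrow> cellwise \<sigma> h (\<lambda>x. u x - w x)"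
  by (rule cellwise_combine) (auto intro: continuous_intros)

lemma cellwise_shift:
  assumes "cellwise \<sigma> h u"
  shows "cellwise (\<sigma> + s) h (\<lambda>x. u (x - s))"
  unfolding cellwise_def
proof
  fix j :: int
  from assms obtain q where q: "continuous_on {\<sigma> + real_of_int j*h .. \<sigma> + (real_of_int j+1)*h} q"
      "\<forall>x\<in>{\<sigma> + real_of_int j*h <..< \<sigma> + (real_of_int j+1)*h}. u x = q x"
    unfolding cellwise_def by blast
  have "continuous_on {\<sigma> + s + real_of_int j*h .. \<sigma> + s + (real_of_int j+1)*h} (\<lambda>x. q (x - s))"
    by (rule continuous_on_compose2[OF q(1)]) (auto intro: continuous_intros)
  moreover have "\<forall>x\<in>{\<sigma> + s + real_of_int j*h <..< \<sigma> + s + (real_of_int j+1)*h}. u (x - s) = q (x - s)"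
    using q(2) by auto
  ultimately show "\<exists>q. continuous_on {\<sigma> + s + real_of_int j*h .. \<sigma> + s + (real_of_int j+1)*h} q \<and>
      (\<forall>x\<in>{\<sigma> + s + real_of_int j*h <..< \<sigma> + s + (real_of_int j+1)*h}. u (x - s) = q x)" by blast
qed

lemma cellwise_integrable:
  assumes h: "h > 0" and cw: "cellwise \<sigma> h u"
  shows "u integrable_on {c..d}"
proof -
  have cell: "u integrable_on {\<sigma> + real_of_int j*h .. \<sigma> + (real_of_int j+1)*h}" for j :: int
  proof -
    from cw obtain q where q: "continuous_on {\<sigma> + real_of_int j*h .. \<sigma> + (real_of_int j+1)*h} q"
        "\<forall>x\<in>{\<sigma> + real_of_int j*h <..< \<sigma> + (real_of_int j+1)*h}. u x = q x"
      unfolding cellwise_def by blast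
    show ?thesis
      by (rule integrable_spike_finite[of "{\<sigma> + real_of_int j*h, \<sigma> + (real_of_int j+1)*h}" _ _ q])
        (use q in \<open>auto intro: integrable_continuous_interval\<close>)
  qed
  have cells: "u integrable_on {\<sigma> + i*h .. \<sigma> + (i + int n)*h}" for i :: int and n :: nat
  proof (induction n)
    case 0 then show ?case using integrable_on_refl[of u "\<sigma> + real_of_int i*h"] by simp
  next
    case (Suc n)
    have "u integrable_on {\<sigma> + real_of_int (i + int n)*h .. \<sigma> + (real_of_int (i + int n)+1)*h}" by (rule cell)
    then show ?case
      by (intro Henstock_Kurzweil_Integration.integrable_combine[OF _ _ Suc.IH]) (use h in \<open>auto simp: algebra_simps\<close>)
  qed
  show ?thesis
  proof (cases "c \<le> d")
    case True
    define i where "i = \<lfloor>(c - \<sigma>)/h\<rfloor>"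
    define n where "n = nat (\<lceil>(d - \<sigma>)/h\<rceil> - i)"
    have "real_of_int i \<le> (c - \<sigma>)/h" unfolding i_def by simp
    hence c1: "\<sigma> + i*h \<le> c" using h by (simp add: field_simps)
    have "\<lceil>(d - \<sigma>)/h\<rceil> \<ge> i" unfolding i_def using True h
      by (meson ceiling_mono divide_right_mono diff_right_mono floor_le_ceiling order_trans less_imp_le)
    then have "(d - \<sigma>)/h \<le> real_of_int (i + int n)" unfolding n_def by linarith
    hence d1: "d \<le> \<sigma> + (i + int n)*h" using h by (simp add: field_simps)
    show ?thesis by (rule integrable_on_subinterval[OF cells[of i n]]) (use c1 d1 in auto)
  qed (use Henstock_Kurzweil_Integration.integrable_on_empty in simp)
qed

lemma finite_grid_points:
  fixes c d \<sigma> h :: real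
  assumes "h > 0"
  shows "finite {x \<in> {c..d}. \<exists>i::int. x = \<sigma> + i*h}"
proof -
  have "{x \<in> {c..d}. \<exists>i::int. x = \<sigma> + i*h} \<subseteq> (\<lambda>i. \<sigma> + real_of_int i*h) ` {\<lfloor>(c - \<sigma>)/h\<rfloor> .. \<lceil>(d - \<sigma>)/h\<rceil>}"
  proof
    fix x assume "x \<in> {x \<in> {c..d}. \<exists>i::int. x = \<sigma> + i*h}"
    then obtain i :: int where x: "x = \<sigma> + i*h" "c \<le> x" "x \<le> d" by auto
    have "(c - \<sigma>)/h \<le> i" "i \<le> (d - \<sigma>)/h" using x assms by (simp_all add: field_simps)
    then have "i \<in> {\<lfloor>(c - \<sigma>)/h\<rfloor> .. \<lceil>(d - \<sigma>)/h\<rceil>}" by (simp add: floor_le_iff le_ceiling_iff)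
    then show "x \<in> (\<lambda>i. \<sigma> + real_of_int i*h) ` {\<lfloor>(c - \<sigma>)/h\<rfloor> .. \<lceil>(d - \<sigma>)/h\<rceil>}" using x by auto
  qed
  then show ?thesis by (rule finite_subset) simp
qed

lemma off_grid_ftc:
  fixes F f :: "real \<Rightarrow> real"
  assumes "h > 0" "c \<le> d" "continuous_on {c..d} F"
    and "\<And>y. \<forall>i::int. y \<noteq> \<sigma> + real_of_int i * h \<Longrightarrow> (F has_real_derivative f y) (at y)"
  shows "(f has_integral (F d - F c)) {c..d}"
proof (rule fundamental_theorem_of_calculus_interior_strong[of "{y \<in> {c..d}. \<exists>i::int. y = \<sigma> + real_of_int i * h}"])
  show "finite {y \<in> {c..d}. \<exists>i::int. y = \<sigma> + real_of_int i * h}" by (rule finite_grid_points[OF assms(1)])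
  fix y assume "y \<in> {c<..<d} - {y \<in> {c..d}. \<exists>i::int. y = \<sigma> + real_of_int i * h}"
  then have "\<forall>i::int. y \<noteq> \<sigma> + real_of_int i * h" by auto
  then show "(F has_vector_derivative f y) (at y)"
    using assms(4) has_real_derivative_iff_has_vector_derivative by blast
qed (use assms in auto)

text \<open>The elementary inequality \<open>|u| \<le> (u\<^sup>2 + 1)/2\<close>, integrated: it converts the \<open>L\<^sup>2\<close> energy
  into an \<open>L\<^sup>1\<close> bound without square roots.\<close>

lemma integral_abs_le_sq:
  fixes u :: "real \<Rightarrow> real"
  assumes "(u has_integral I) {c..d}" "(\<lambda>x. (u x)^2) integrable_on {c..d}"
  shows "\<bar>I\<bar> \<le> integral {c..d} (\<lambda>x. ((u x)^2 + 1)/2)"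
proof -
  have sq: "\<bar>t\<bar> \<le> (t^2 + 1)/2" for t :: real
    using zero_le_power2[of "\<bar>t\<bar> - 1"] by (simp add: power2_eq_square algebra_simps)
  have i2: "((\<lambda>x. ((u x)^2 + 1)/2) has_integral integral {c..d} (\<lambda>x. ((u x)^2 + 1)/2)) {c..d}"
    using integrable_add[OF assms(2) integrable_const_ivl[of 1 c d]]
    by (intro integrable_integral integrable_on_divide)
  have "I \<le> integral {c..d} (\<lambda>x. ((u x)^2 + 1)/2)"
    using has_integral_le[OF assms(1) i2] sq by (meson abs_ge_self order_trans)
  moreover have "-I \<le> integral {c..d} (\<lambda>x. ((u x)^2 + 1)/2)"
    using has_integral_le[OF has_integral_neg[OF assms(1)] i2] sq by (meson abs_ge_minus_self order_trans)
  ultimately show ?thesis by linarith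
qed

lemma integral_sq_plus_one_half:
  fixes u :: "real \<Rightarrow> real"
  assumes "(\<lambda>x. (u x)^2) integrable_on {c..d}" "c \<le> d"
  shows "integral {c..d} (\<lambda>x. ((u x)^2 + 1)/2) = (integral {c..d} (\<lambda>x. (u x)^2) + (d - c)) / 2"
proof -
  have "Henstock_Kurzweil_Integration.content {c..d} = d - c" using assms(2) by simp
  moreover have "((\<lambda>x. 1) has_integral Henstock_Kurzweil_Integration.content {c..d} *\<^sub>R (1::real)) {c..d}"
    by (rule has_integral_const_real)
  ultimately have "((\<lambda>x. 1) has_integral d - c) {c..d}" by (simp only: real_scaleR_def mult_1_right)
  with integrable_integral[OF assms(1)]
  have "((\<lambda>x. ((u x)^2 + 1)/2) has_integral (integral {c..d} (\<lambda>x. (u x)^2) + (d - c)) / 2) {c..d}"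
    by (intro has_integral_divide has_integral_add)
  then show ?thesis by (rule integral_unique)
qed

lemma abs_le_osc_plus_mean:
  fixes f :: "real \<Rightarrow> real"
  assumes ab: "a < b" and cf: "continuous_on {a..b} f"
    and osc: "\<forall>x\<in>{a..b}. \<forall>y\<in>{a..b}. \<bar>f x - f y\<bar> \<le> B" and x: "x \<in> {a..b}"
  shows "\<bar>f x\<bar> \<le> B + \<bar>integral {a..b} f\<bar> / (b - a)"
proof -
  define I where "I = integral {a..b} f"
  have hf: "(f has_integral I) {a..b}" unfolding I_def using cf integrable_continuous_interval by blast
  have hd: "((\<lambda>y. f x - f y) has_integral ((b - a) * f x - I)) {a..b}"
    using has_integral_diff[OF has_integral_const_real[of "f x" a b] hf] ab by simp
  have "(b - a) * f x - I \<le> (b - a) * B" "-((b - a) * f x - I) \<le> (b - a) * B"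
    using has_integral_le[OF hd has_integral_const_real, of B]
      has_integral_le[OF has_integral_neg[OF hd] has_integral_const_real, of B] osc x ab
    by (auto simp: abs_le_iff)
  then have "(b - a) * \<bar>f x\<bar> \<le> (b - a) * B + \<bar>I\<bar>" by (simp add: abs_le_iff algebra_simps)
  then show ?thesis using ab unfolding I_def by (simp add: field_simps)
qed

text \<open>The telescoping identity behind repeated integration by parts.\<close>

lemma telescope:
  fixes \<alpha> \<beta> \<gamma> :: "nat \<Rightarrow> real"
  assumes "\<forall>i. \<gamma> (Suc i) = \<beta> i"
  shows "(\<Sum>i\<le>n. (-1)^i * (\<alpha> (Suc i) * \<beta> i + \<alpha> i * \<gamma> i)) = \<alpha> 0 * \<gamma> 0 + (-1)^n * \<alpha> (Suc n) * \<beta> n"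
  by (induction n) (simp_all add: assms algebra_simps)


section \<open>The periodic grid and the class of regular functions\<close>

locale periodic_grid =
  fixes a b :: real and N k :: nat
  assumes ab: "a < b" and N: "N \<ge> 1"
begin

definition h :: real where "h = (b - a) / real N"

lemma h_pos: "h > 0" using ab N unfolding h_def by simp

lemma N_times_h: "real N * h = b - a" using N unfolding h_def by simp

text \<open>The iterates of the scheme stay in this class, with \<open>\<sigma>\<close> moving with the shifts.\<close>

definition regular :: "real \<Rightarrow> (real \<Rightarrow> real) \<Rightarrow> bool" where
  "regular \<sigma> f \<longleftrightarrow> (\<forall>x. f (x + (b - a)) = f x) \<and>
     (\<forall>l<k. \<forall>x. ((deriv ^^ l) f has_real_derivative (deriv ^^ Suc l) f x) (at x)) \<and>
     continuous_on UNIV ((deriv ^^ k) f) \<and>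
     (\<forall>x. (\<forall>i::int. x \<noteq> \<sigma> + real_of_int i * h) \<longrightarrow>
        ((deriv ^^ k) f has_real_derivative (deriv ^^ Suc k) f x) (at x)) \<and>
     cellwise \<sigma> h ((deriv ^^ Suc k) f)"

definition energy :: "(real \<Rightarrow> real) \<Rightarrow> real" where
  "energy f = integral {a..b} (\<lambda>x. ((deriv ^^ Suc k) f x)^2)"

lemma regular_continuous:
  assumes "regular \<sigma> f" "l \<le> k"
  shows "continuous_on UNIV ((deriv ^^ l) f)"
proof (cases "l < k")
  case True
  with assms have "\<forall>x. ((deriv ^^ l) f has_real_derivative (deriv ^^ Suc l) f x) (at x)"
    unfolding regular_def by blast
  then show ?thesis by (meson DERIV_isCont continuous_at_imp_continuous_on)
qed (use assms in \<open>auto simp: regular_def\<close>)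

lemma regular_integrable: "regular \<sigma> f \<Longrightarrow> f integrable_on {c..d}"
  using regular_continuous[of \<sigma> f 0]
  by (simp add: continuous_on_subset integrable_continuous_interval)

lemma regular_sq_integrable:
  assumes "regular \<sigma> f"
  shows "(\<lambda>x. ((deriv ^^ Suc k) f x)^2) integrable_on {c..d}"
proof -
  have cw: "cellwise \<sigma> h ((deriv ^^ Suc k) f)" using assms unfolding regular_def by blast
  have "cellwise \<sigma> h (\<lambda>x. (deriv ^^ Suc k) f x * (deriv ^^ Suc k) f x)"
    by (rule cellwise_mult[OF cw cw])
  then show ?thesis using cellwise_integrable[OF h_pos] by (simp add: power2_eq_square)
qed

lemma energy_nonneg: "regular \<sigma> f \<Longrightarrow> energy f \<ge> 0"
  unfolding energy_def by (rule integral_nonneg[OF regular_sq_integrable]) auto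

lemma regular_periodic_deriv: "regular \<sigma> f \<Longrightarrow> (deriv ^^ l) f (x + (b - a)) = (deriv ^^ l) f x"
  by (rule periodic_higher_deriv) (auto simp: regular_def)

lemma regular_shift:
  assumes f: "regular \<sigma> f"
  shows "regular (\<sigma> + s) (\<lambda>x. f (x - s))"
proof -
  have sh: "((\<lambda>x. F (x - s)) has_real_derivative D) (at x)" if "(F has_real_derivative D) (at (x - s))"
    for F D x
    using that DERIV_shift[of F D x "-s"] by simp
  have "\<forall>x. f (x + (b - a) - s) = f (x - s)" using f unfolding regular_def by (metis add_diff_eq diff_add_eq)
  moreover have "\<forall>l<k. \<forall>x. ((\<lambda>x. (deriv ^^ l) f (x - s)) has_real_derivative (deriv ^^ Suc l) f (x - s)) (at x)"
    using f unfolding regular_def by (auto intro!: sh)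
  moreover have "continuous_on UNIV (\<lambda>x. (deriv ^^ k) f (x - s))"
    using f unfolding regular_def
    by (auto intro!: continuous_on_compose2[of UNIV "(deriv ^^ k) f"] continuous_intros)
  moreover have "((\<lambda>x. (deriv ^^ k) f (x - s)) has_real_derivative (deriv ^^ Suc k) f (x - s)) (at x)"
    if "\<forall>i::int. x \<noteq> \<sigma> + s + real_of_int i * h" for x
  proof (rule sh)
    have "\<forall>i::int. x - s \<noteq> \<sigma> + real_of_int i * h" using that by (auto simp: algebra_simps)
    with f show "((deriv ^^ k) f has_real_derivative (deriv ^^ Suc k) f (x - s)) (at (x - s))"
      unfolding regular_def by blast
  qed
  moreover have "cellwise (\<sigma> + s) h (\<lambda>x. (deriv ^^ Suc k) f (x - s))"
    using f unfolding regular_def by (auto intro: cellwise_shift)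
  ultimately show ?thesis unfolding regular_def higher_deriv_shift_minus by simp
qed

lemma energy_shift:
  assumes f: "regular \<sigma> f"
  shows "energy (\<lambda>x. f (x - s)) = energy f"
  unfolding energy_def higher_deriv_shift_minus
  by (rule periodic_integral_shift[OF ab, where w="\<lambda>x. ((deriv ^^ Suc k) f x)^2"])
    (simp only: regular_periodic_deriv[OF f] simp_thms, rule regular_sq_integrable[OF f])

lemma integral_shift:
  assumes f: "regular \<sigma> f"
  shows "integral {a..b} (\<lambda>x. f (x - s)) = integral {a..b} f"
proof (rule periodic_integral_shift[OF ab])
  show "\<forall>x. f (x + (b - a)) = f x" using f unfolding regular_def by blast
qed (rule regular_integrable[OF f])

end


section \<open>The piecewise Hermite interpolant\<close>

context periodic_grid
begin

definition cell_poly :: "(real \<Rightarrow> real) \<Rightarrow> int \<Rightarrow> real poly" where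
  "cell_poly g j = hermite_poly k (a + real_of_int j * h) (a + real_of_int (j+1) * h)
      (\<lambda>l. (deriv ^^ l) g (a + real_of_int j * h)) (\<lambda>l. (deriv ^^ l) g (a + real_of_int (j+1) * h))"

definition cell_index :: "real \<Rightarrow> int" where "cell_index x = \<lfloor>(x - a) / h\<rfloor>"

definition interp_deriv :: "(real \<Rightarrow> real) \<Rightarrow> nat \<Rightarrow> real \<Rightarrow> real" where
  "interp_deriv g l x = poly ((pderiv ^^ l) (cell_poly g (cell_index x))) x"

lemma hermite_interp_eq: "hermite_interp k a b N g = interp_deriv g 0"
  unfolding hermite_interp_def interp_deriv_def cell_poly_def cell_index_def grid_pt_def Let_def
  by (simp add: h_def)

lemma cell_poly_interpolates:
  "degree (cell_poly g j) \<le> 2*k+1 \<and>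
   (\<forall>l\<le>k. poly ((pderiv ^^ l) (cell_poly g j)) (a + real_of_int j * h) = (deriv ^^ l) g (a + real_of_int j * h) \<and>
      poly ((pderiv ^^ l) (cell_poly g j)) (a + real_of_int (j+1) * h) = (deriv ^^ l) g (a + real_of_int (j+1) * h))"
  unfolding cell_poly_def by (rule hermite_poly_interpolates) (use h_pos in simp)

lemma cell_index_eq:
  assumes "a + real_of_int j * h \<le> x" "x < a + real_of_int (j+1) * h"
  shows "cell_index x = j"
proof -
  have "real_of_int j \<le> (x - a)/h" "(x - a)/h < real_of_int j + 1"
    using assms h_pos by (simp_all add: field_simps)
  then show ?thesis unfolding cell_index_def by (simp add: floor_eq_iff)
qed

lemma cell_index_bounds:
  "a + real_of_int (cell_index x) * h \<le> x" "x < a + real_of_int (cell_index x + 1) * h"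
proof -
  have "real_of_int (cell_index x) \<le> (x - a)/h" "(x - a)/h < real_of_int (cell_index x) + 1"
    unfolding cell_index_def by linarith+
  then show "a + real_of_int (cell_index x) * h \<le> x" "x < a + real_of_int (cell_index x + 1) * h"
    using h_pos by (simp_all add: field_simps)
qed

lemma open_cell_off_grid:
  assumes "y \<in> {a + real_of_int j * h <..< a + real_of_int (j+1) * h}"
  shows "\<forall>i::int. y \<noteq> a + real_of_int i * h" "cell_index y = j"
proof -
  show "\<forall>i::int. y \<noteq> a + real_of_int i * h"
  proof (intro allI notI)
    fix i :: int assume "y = a + real_of_int i * h"
    with assms h_pos have "real_of_int j < real_of_int i" "real_of_int i < real_of_int (j + 1)"
      by (simp_all add: mult_less_cancel_right)
    then have "j < i" "i < j + 1" unfolding of_int_less_iff .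
    then show False by linarith
  qed
  show "cell_index y = j" by (rule cell_index_eq) (use assms in auto)
qed

text \<open>On each closed cell, the derivatives of order \<open>\<le> k\<close> of the interpolant are those of the cell
  polynomial; at the right end point this uses that neighbouring polynomials share their jets.\<close>

lemma interp_deriv_on_cell:
  assumes "l \<le> k" "a + real_of_int j * h \<le> x" "x \<le> a + real_of_int (j+1) * h"
  shows "interp_deriv g l x = poly ((pderiv ^^ l) (cell_poly g j)) x"
proof (cases "x < a + real_of_int (j+1) * h")
  case True
  then show ?thesis unfolding interp_deriv_def using cell_index_eq[OF assms(2) True] by simp
next
  case False
  with assms have x: "x = a + real_of_int (j+1) * h" by simp
  have "cell_index x = j + 1" by (rule cell_index_eq) (use x h_pos in auto)
  then have "interp_deriv g l x = poly ((pderiv ^^ l) (cell_poly g (j+1))) (a + real_of_int (j+1) * h)"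
    unfolding interp_deriv_def by (simp add: x)
  then show ?thesis
    using cell_poly_interpolates[of g "j+1"] cell_poly_interpolates[of g j] assms(1) x by simp
qed

lemma interp_deriv_has_derivative:
  assumes "l < k"
  shows "(interp_deriv g l has_real_derivative interp_deriv g (Suc l) x) (at x)"
proof -
  define j where "j = cell_index x"
  have b1: "a + real_of_int j * h \<le> x" and b2: "x < a + real_of_int (j+1) * h"
    unfolding j_def by (rule cell_index_bounds)+
  have within: "(interp_deriv g l has_real_derivative interp_deriv g (Suc l) x)
      (at x within {a + real_of_int i * h .. a + real_of_int (i+1) * h})"
    if "a + real_of_int i * h \<le> x" "x \<le> a + real_of_int (i+1) * h" for i
  proof -
    have "(interp_deriv g l has_real_derivative poly (pderiv ((pderiv ^^ l) (cell_poly g i))) x)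
        (at x within {a + real_of_int i * h .. a + real_of_int (i+1) * h})"
      by (rule has_real_derivative_within_poly) (use interp_deriv_on_cell[of l i _ g] assms that in auto)
    then show ?thesis using interp_deriv_on_cell[of "Suc l" i x g] assms that by simp
  qed
  show ?thesis
  proof (cases "x = a + real_of_int j * h")
    case False
    with b1 b2 have "at x within {a + real_of_int j * h .. a + real_of_int (j+1) * h} = at x"
      by (intro at_within_Icc_at) auto
    with within[OF b1 less_imp_le[OF b2]] show ?thesis by simp
  next
    case True
    have "(interp_deriv g l has_real_derivative interp_deriv g (Suc l) x)
        (at x within {a + real_of_int (j - 1) * h .. x})"
      using within[of "j - 1"] True h_pos by simp
    with within[OF b1 less_imp_le[OF b2]] show ?thesis
      by (intro has_real_derivative_from_both_sides) (use True h_pos b2 in \<open>auto simp: algebra_simps\<close>)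
  qed
qed

text \<open>The \<open>k\<close>-th derivative of the interpolant is continuous (neighbouring cell polynomials
  share their jets at the nodes) and differentiable off the grid.\<close>

lemma interp_deriv_top_continuous: "continuous_on UNIV (interp_deriv g k)"
proof -
  have cont_cell: "continuous_on {a + real_of_int j * h .. a + real_of_int (j+1) * h} (interp_deriv g k)" for j
  proof -
    have "continuous_on {a + real_of_int j * h .. a + real_of_int (j+1) * h}
        (\<lambda>x. poly ((pderiv ^^ k) (cell_poly g j)) x)"
      by (intro continuous_intros)
    then show ?thesis by (rule continuous_on_eq) (use interp_deriv_on_cell[of k j _ g] in auto)
  qed
  have "isCont (interp_deriv g k) x" for x
  proof -
    define j where "j = cell_index x"
    have b1: "a + real_of_int j * h \<le> x" and b2: "x < a + real_of_int (j+1) * h"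
      unfolding j_def by (rule cell_index_bounds)+
    have "continuous_on ({a + real_of_int (j-1) * h .. a + real_of_int (j - 1 + 1) * h} \<union>
        {a + real_of_int j * h .. a + real_of_int (j+1) * h}) (interp_deriv g k)"
      by (rule continuous_on_closed_Un[OF _ _ cont_cell cont_cell]) auto
    moreover have "{a + real_of_int (j-1) * h .. a + real_of_int (j - 1 + 1) * h} \<union>
        {a + real_of_int j * h .. a + real_of_int (j+1) * h} = {a + real_of_int (j-1) * h .. a + real_of_int (j+1) * h}"
      using h_pos by (auto simp: algebra_simps)
    moreover have "x \<in> interior {a + real_of_int (j-1) * h .. a + real_of_int (j+1) * h}"
      using b1 b2 h_pos by (auto simp: algebra_simps)
    ultimately show ?thesis by (metis continuous_on_interior)
  qed
  then show ?thesis by (simp add: continuous_at_imp_continuous_on)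
qed

lemma interp_deriv_top_has_derivative:
  assumes "\<forall>i::int. x \<noteq> a + real_of_int i * h"
  shows "(interp_deriv g k has_real_derivative poly ((pderiv ^^ Suc k) (cell_poly g (cell_index x))) x) (at x)"
proof -
  define j where "j = cell_index x"
  have b1: "a + real_of_int j * h \<le> x" and b2: "x < a + real_of_int (j+1) * h"
    unfolding j_def by (rule cell_index_bounds)+
  with assms have b1': "a + real_of_int j * h < x" by (metis order_le_less)
  have "(interp_deriv g k has_real_derivative poly (pderiv ((pderiv ^^ k) (cell_poly g j))) x) (at x)"
    by (rule has_field_derivative_transform_within_open[OF poly_DERIV,
          where S="{a + real_of_int j * h <..< a + real_of_int (j+1) * h}"])
      (use b1' b2 interp_deriv_on_cell[of k j _ g] in auto)
  then show ?thesis unfolding j_def by simp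
qed

lemma higher_deriv_hermite_interp: "l \<le> k \<Longrightarrow> (deriv ^^ l) (hermite_interp k a b N g) = interp_deriv g l"
proof (induction l)
  case (Suc l)
  then have "(deriv ^^ Suc l) (hermite_interp k a b N g) = deriv (interp_deriv g l)" by simp
  also have "\<dots> = interp_deriv g (Suc l)"
    by (rule ext, rule DERIV_imp_deriv, rule interp_deriv_has_derivative) (use Suc.prems in simp)
  finally show ?case .
qed (simp add: hermite_interp_eq)

lemma top_deriv_hermite_interp:
  assumes "\<forall>i::int. x \<noteq> a + real_of_int i * h"
  shows "(deriv ^^ Suc k) (hermite_interp k a b N g) x = poly ((pderiv ^^ Suc k) (cell_poly g (cell_index x))) x"
  using higher_deriv_hermite_interp[of k g] DERIV_imp_deriv[OF interp_deriv_top_has_derivative[OF assms]] by simp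

lemma cell_poly_periodic:
  assumes g: "regular \<sigma> g"
  shows "cell_poly g (j + int N) = pcompose (cell_poly g j) [:-(b-a),1:]"
proof -
  have xs: "a + real_of_int (j + int N) * h = a + real_of_int j * h + (b - a)"
      "a + real_of_int (j + int N + 1) * h = a + real_of_int (j+1) * h + (b - a)"
    using N_times_h by (simp_all add: algebra_simps)
  show ?thesis unfolding cell_poly_def[of g "j + int N"]
  proof (rule hermite_poly_eqI)
    show "a + real_of_int (j + int N) * h \<noteq> a + real_of_int (j + int N + 1) * h" using h_pos by simp
    show "degree (pcompose (cell_poly g j) [:-(b-a),1:]) \<le> 2*k+1"
      using cell_poly_interpolates[of g j] by (simp add: degree_pcompose)
  qed (unfold xs higher_pderiv_pcompose_lin poly_pcompose regular_periodic_deriv[OF g],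
       use cell_poly_interpolates[of g j] in simp)
qed

lemma hermite_interp_periodic:
  assumes g: "regular \<sigma> g"
  shows "hermite_interp k a b N g (x + (b - a)) = hermite_interp k a b N g x"
proof -
  have "(x + (b - a) - a)/h = (x - a)/h + real N" using N_times_h h_pos by (simp add: field_simps)
  then have "cell_index (x + (b - a)) = cell_index x + int N" unfolding cell_index_def
    by (metis floor_add_int of_int_of_nat_eq)
  then show ?thesis unfolding hermite_interp_eq interp_deriv_def
    by (simp add: cell_poly_periodic[OF g] poly_pcompose)
qed

lemma regular_hermite_interp:
  assumes g: "regular \<sigma> g"
  shows "regular a (hermite_interp k a b N g)"
  unfolding regular_def
proof (intro conjI allI impI)
  show "hermite_interp k a b N g (x + (b - a)) = hermite_interp k a b N g x" for x
    by (rule hermite_interp_periodic[OF g])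
  show "((deriv ^^ l) (hermite_interp k a b N g) has_real_derivative
      (deriv ^^ Suc l) (hermite_interp k a b N g) x) (at x)" if "l < k" for l x
    using higher_deriv_hermite_interp[of l g] higher_deriv_hermite_interp[of "Suc l" g]
      interp_deriv_has_derivative[OF that, of g x] that by simp
  show "continuous_on UNIV ((deriv ^^ k) (hermite_interp k a b N g))"
    using higher_deriv_hermite_interp[of k g] interp_deriv_top_continuous[of g] by simp
  show "((deriv ^^ k) (hermite_interp k a b N g) has_real_derivative
      (deriv ^^ Suc k) (hermite_interp k a b N g) x) (at x)"
    if "\<forall>i::int. x \<noteq> a + real_of_int i * h" for x
    using higher_deriv_hermite_interp[of k g] interp_deriv_top_has_derivative[OF that, of g]
      top_deriv_hermite_interp[OF that, of g] by simp
  show "cellwise a h ((deriv ^^ Suc k) (hermite_interp k a b N g))"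
    unfolding cellwise_def
  proof
    fix j :: int
    have "(deriv ^^ Suc k) (hermite_interp k a b N g) x = poly ((pderiv ^^ Suc k) (cell_poly g j)) x"
      if "x \<in> {a + real_of_int j * h <..< a + (real_of_int j + 1) * h}" for x
      using top_deriv_hermite_interp[of x g] open_cell_off_grid[of x j] that by simp
    moreover have "continuous_on {a + real_of_int j * h .. a + (real_of_int j + 1) * h}
        (\<lambda>x. poly ((pderiv ^^ Suc k) (cell_poly g j)) x)"
      by (intro continuous_intros)
    ultimately show "\<exists>q. continuous_on {a + real_of_int j * h .. a + (real_of_int j + 1) * h} q \<and>
      (\<forall>x\<in>{a + real_of_int j * h <..< a + (real_of_int j + 1) * h}.
        (deriv ^^ Suc k) (hermite_interp k a b N g) x = q x)"
      by blast
  qed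
qed

end


section \<open>Estimates on one cell\<close>

context periodic_grid
begin

context
  fixes \<sigma> g assumes g: "regular \<sigma> g"
begin

definition cell_err :: "int \<Rightarrow> nat \<Rightarrow> real \<Rightarrow> real" where
  "cell_err j l y = (deriv ^^ l) g y - poly ((pderiv ^^ l) (cell_poly g j)) y"

lemma cell_err_endpoints:
  assumes "l \<le> k"
  shows "cell_err j l (a + real_of_int j * h) = 0" "cell_err j l (a + real_of_int (j+1) * h) = 0"
  using cell_poly_interpolates[of g j] assms unfolding cell_err_def by auto

lemma cell_err_has_derivative:
  assumes "l < k"
  shows "(cell_err j l has_real_derivative cell_err j (Suc l) y) (at y)"
proof -
  have "((deriv ^^ l) g has_real_derivative (deriv ^^ Suc l) g y) (at y)"
    using g assms unfolding regular_def by blast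
  then show ?thesis
    unfolding cell_err_def[abs_def] using poly_DERIV[of "(pderiv ^^ l) (cell_poly g j)" y]
    by (auto intro: DERIV_diff)
qed

lemma cell_err_top_has_derivative:
  assumes "\<forall>i::int. y \<noteq> \<sigma> + real_of_int i * h"
  shows "(cell_err j k has_real_derivative cell_err j (Suc k) y) (at y)"
proof -
  have "((deriv ^^ k) g has_real_derivative (deriv ^^ Suc k) g y) (at y)"
    using g assms unfolding regular_def by blast
  then show ?thesis
    unfolding cell_err_def[abs_def] using poly_DERIV[of "(pderiv ^^ k) (cell_poly g j)" y]
    by (auto intro: DERIV_diff)
qed

lemma cell_err_continuous: "l \<le> k \<Longrightarrow> continuous_on S (cell_err j l)"
  unfolding cell_err_def[abs_def]
  by (intro continuous_intros continuous_on_subset[OF regular_continuous[OF g]]) auto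

lemma cell_err_top_sq_integrable: "(\<lambda>y. (cell_err j (Suc k) y)^2) integrable_on {c..d}"
proof -
  have "cellwise \<sigma> h ((deriv ^^ Suc k) g)" using g unfolding regular_def by blast
  then have cw: "cellwise \<sigma> h (cell_err j (Suc k))"
    unfolding cell_err_def[abs_def] by (rule cellwise_diff) (intro cellwise_cont continuous_intros)
  have "cellwise \<sigma> h (\<lambda>y. cell_err j (Suc k) y * cell_err j (Suc k) y)" by (rule cellwise_mult[OF cw cw])
  then show ?thesis using cellwise_integrable[OF h_pos] by (simp add: power2_eq_square)
qed

text \<open>Integrate by parts \<open>k+1\<close> times: the antiderivative \<open>\<Sum>\<^sub>i (-1)^i p^(k+1+i) e^(k-i)\<close> vanishes at both
  ends of the cell, and the last term vanishes because \<open>p^(2k+2) = 0\<close>.\<close>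

lemma cell_orthogonality:
  "((\<lambda>y. poly ((pderiv ^^ Suc k) (cell_poly g j)) y * cell_err j (Suc k) y) has_integral 0)
     {a + real_of_int j * h .. a + real_of_int (j+1) * h}"
proof -
  define x0 where "x0 = a + real_of_int j * h"
  define x1 where "x1 = a + real_of_int (j+1) * h"
  define A where "A i y = poly ((pderiv ^^ (Suc k + i)) (cell_poly g j)) y" for i y
  define F where "F y = (\<Sum>i\<le>k. (-1)^i * A i y * cell_err j (k - i) y)" for y
  have DA: "(A i has_real_derivative A (Suc i) y) (at y)" for i y
    unfolding A_def[abs_def] using poly_DERIV[of "(pderiv ^^ (Suc k + i)) (cell_poly g j)" y] by simp
  have A_top: "A (Suc k) y = 0" for y
    using cell_poly_interpolates[of g j] higher_pderiv_above_degree[of "cell_poly g j" "Suc k + Suc k"]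
    unfolding A_def by simp
  have D_err: "(cell_err j (k - i) has_real_derivative cell_err j (Suc k - i) y) (at y)"
    if "i \<le> k" "\<forall>i::int. y \<noteq> \<sigma> + real_of_int i * h" for i y
    using cell_err_top_has_derivative[OF that(2)] cell_err_has_derivative[of "k - i" j y] that
    by (cases "i = 0") (auto simp: Suc_diff_le)
  have DF: "(F has_real_derivative poly ((pderiv ^^ Suc k) (cell_poly g j)) y * cell_err j (Suc k) y) (at y)"
    if "\<forall>i::int. y \<noteq> \<sigma> + real_of_int i * h" for y
  proof -
    have "(F has_real_derivative
        (\<Sum>i\<le>k. (-1)^i * (A (Suc i) y * cell_err j (k - i) y + A i y * cell_err j (Suc k - i) y))) (at y)"
      unfolding F_def[abs_def] mult.assoc
      by (intro DERIV_sum DERIV_cmult, rule DERIV_cong[OF DERIV_mult[OF DA D_err[OF _ that]]])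
        (auto simp: mult.commute)
    also have "(\<Sum>i\<le>k. (-1)^i * (A (Suc i) y * cell_err j (k - i) y + A i y * cell_err j (Suc k - i) y)) =
        A 0 y * cell_err j (Suc k - 0) y + (-1)^k * A (Suc k) y * cell_err j (k - k) y"
      by (rule telescope[where \<alpha>="\<lambda>i. A i y" and \<beta>="\<lambda>i. cell_err j (k - i) y"
            and \<gamma>="\<lambda>i. cell_err j (Suc k - i) y"]) simp
    finally show ?thesis unfolding A_top unfolding A_def by simp
  qed
  have "continuous_on {x0..x1} F"
    unfolding F_def[abs_def] A_def by (intro continuous_intros cell_err_continuous) auto
  then have "((\<lambda>y. poly ((pderiv ^^ Suc k) (cell_poly g j)) y * cell_err j (Suc k) y) has_integral (F x1 - F x0))
      {x0..x1}"
    by (intro off_grid_ftc[OF h_pos] DF) (use h_pos in \<open>auto simp: x0_def x1_def\<close>)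
  moreover have "F x0 = 0" "F x1 = 0"
    unfolding F_def x0_def x1_def using cell_err_endpoints by auto
  ultimately show ?thesis unfolding x0_def x1_def by simp
qed

lemma cell_pythagoras:
  fixes j :: int
  defines "C \<equiv> {a + real_of_int j * h .. a + real_of_int (j+1) * h}"
  shows "integral C (\<lambda>y. ((deriv ^^ Suc k) g y)^2) =
    integral C (\<lambda>y. (poly ((pderiv ^^ Suc k) (cell_poly g j)) y)^2) + integral C (\<lambda>y. (cell_err j (Suc k) y)^2)"
proof -
  define d where "d y = poly ((pderiv ^^ Suc k) (cell_poly g j)) y" for y
  define e where "e y = cell_err j (Suc k) y" for y
  have "((\<lambda>y. (d y)^2) has_integral integral C (\<lambda>y. (d y)^2)) C"
    unfolding d_def C_def by (intro integrable_integral integrable_continuous_interval continuous_intros)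
  moreover have "((\<lambda>y. (e y)^2) has_integral integral C (\<lambda>y. (e y)^2)) C"
    unfolding e_def C_def by (rule integrable_integral[OF cell_err_top_sq_integrable])
  moreover have "((\<lambda>y. d y * e y) has_integral 0) C"
    unfolding d_def e_def C_def by (rule cell_orthogonality)
  ultimately have "((\<lambda>y. (d y)^2 + 2 * (d y * e y) + (e y)^2) has_integral
      (integral C (\<lambda>y. (d y)^2) + 2 * 0 + integral C (\<lambda>y. (e y)^2))) C"
    by (intro has_integral_add has_integral_mult_right)
  moreover have "(d y)^2 + 2 * (d y * e y) + (e y)^2 = ((deriv ^^ Suc k) g y)^2" for y
    unfolding d_def e_def cell_err_def by (simp add: power2_eq_square algebra_simps)
  ultimately show ?thesis unfolding d_def e_def by (simp add: integral_unique)
qed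

lemma cell_energy_le:
  fixes j :: int
  defines "C \<equiv> {a + real_of_int j * h .. a + real_of_int (j+1) * h}"
  shows "integral C (\<lambda>y. ((deriv ^^ Suc k) (hermite_interp k a b N g) y)^2) \<le>
    integral C (\<lambda>y. ((deriv ^^ Suc k) g y)^2)"
proof -
  have "integral C (\<lambda>y. ((deriv ^^ Suc k) (hermite_interp k a b N g) y)^2) =
      integral C (\<lambda>y. (poly ((pderiv ^^ Suc k) (cell_poly g j)) y)^2)"
  proof (rule integral_spike[of "{a + real_of_int j * h, a + real_of_int (j+1) * h}"])
    fix y assume "y \<in> C - {a + real_of_int j * h, a + real_of_int (j+1) * h}"
    then have y: "y \<in> {a + real_of_int j * h <..< a + real_of_int (j+1) * h}" unfolding C_def by auto
    show "(poly ((pderiv ^^ Suc k) (cell_poly g j)) y)^2 = ((deriv ^^ Suc k) (hermite_interp k a b N g) y)^2"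
      using top_deriv_hermite_interp[OF open_cell_off_grid(1)[OF y]] open_cell_off_grid(2)[OF y] by simp
  qed simp
  moreover have "integral C (\<lambda>y. (cell_err j (Suc k) y)^2) \<ge> 0"
    unfolding C_def by (rule integral_nonneg[OF cell_err_top_sq_integrable]) simp
  ultimately show ?thesis using cell_pythagoras[of j] unfolding C_def by simp
qed

text \<open>The \<open>k\<close>-th derivative of the error vanishes at the left end point of the cell, so it is
  controlled pointwise by the \<open>L\<^sup>2\<close> norm of its derivative.\<close>

lemma cell_err_top_bound:
  fixes j :: int
  defines "C \<equiv> {a + real_of_int j * h .. a + real_of_int (j+1) * h}"
  assumes "y \<in> C"
  shows "\<bar>cell_err j k y\<bar> \<le> (integral C (\<lambda>y. (cell_err j (Suc k) y)^2) + h) / 2"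
proof -
  define x0 where "x0 = a + real_of_int j * h"
  have "(cell_err j (Suc k) has_integral (cell_err j k y - cell_err j k x0)) {x0..y}"
    by (intro off_grid_ftc[OF h_pos] cell_err_continuous cell_err_top_has_derivative)
      (use assms in \<open>auto simp: C_def x0_def\<close>)
  then have "(cell_err j (Suc k) has_integral cell_err j k y) {x0..y}"
    using cell_err_endpoints(1)[of k j] by (simp add: x0_def)
  then have "\<bar>cell_err j k y\<bar> \<le> integral {x0..y} (\<lambda>x. ((cell_err j (Suc k) x)^2 + 1)/2)"
    by (rule integral_abs_le_sq[OF _ cell_err_top_sq_integrable])
  also have "\<dots> \<le> integral C (\<lambda>x. ((cell_err j (Suc k) x)^2 + 1)/2)"
    using assms unfolding C_def x0_def
    by (intro integral_subset_le integrable_on_divide integrable_add cell_err_top_sq_integrable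
        integrable_const_ivl) auto
  also have "\<dots> = (integral C (\<lambda>y. (cell_err j (Suc k) y)^2) + h) / 2"
    unfolding C_def using h_pos
    by (subst integral_sq_plus_one_half[OF cell_err_top_sq_integrable]) (simp_all add: algebra_simps)
  finally show ?thesis .
qed

text \<open>Each lower derivative of the error gains a factor \<open>h\<close> by the mean value theorem, since
  it vanishes at the left end point too.\<close>

lemma cell_err_bound:
  fixes j :: int
  defines "C \<equiv> {a + real_of_int j * h .. a + real_of_int (j+1) * h}"
  defines "B \<equiv> (integral C (\<lambda>y. (cell_err j (Suc k) y)^2) + h) / 2"
  assumes "n \<le> k" "y \<in> C"
  shows "\<bar>cell_err j (k - n) y\<bar> \<le> h^n * B"
  using assms(3,4)
proof (induction n arbitrary: y)
  case 0
  then show ?case using cell_err_top_bound unfolding B_def C_def by simp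
next
  case (Suc n)
  define l where "l = k - Suc n"
  define x0 where "x0 = a + real_of_int j * h"
  have l: "l < k" "Suc l = k - n" unfolding l_def using Suc.prems by auto
  have C_eq: "C = {x0..x0 + h}" unfolding C_def x0_def by (simp add: algebra_simps)
  have der_bound: "\<bar>cell_err j (Suc l) z\<bar> \<le> h^n * B" if "z \<in> C" for z
    using Suc.IH[OF _ that] Suc.prems(1) l(2) by simp
  have "\<bar>cell_err j l y - cell_err j l x0\<bar> \<le> h^n * B * \<bar>y - x0\<bar>"
  proof (rule field_differentiable_bound[of C, unfolded real_norm_def])
    show "convex C" unfolding C_eq by (rule convex_real_interval)
    show "(cell_err j l has_real_derivative cell_err j (Suc l) z) (at z within C)" for z
      using cell_err_has_derivative[OF l(1)] by (rule has_field_derivative_at_within)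
    show "\<bar>cell_err j (Suc l) z\<bar> \<le> h^n * B" if "z \<in> C" for z using der_bound[OF that] .
    show "y \<in> C" "x0 \<in> C" using Suc.prems(2) h_pos unfolding C_eq by auto
  qed
  moreover have "cell_err j l x0 = 0" using cell_err_endpoints(1)[of l j] l(1) unfolding x0_def by simp
  ultimately have "\<bar>cell_err j l y\<bar> \<le> h^n * B * \<bar>y - x0\<bar>" by simp
  also have "\<dots> \<le> h^n * B * h"
  proof (rule mult_left_mono)
    show "\<bar>y - x0\<bar> \<le> h" using Suc.prems(2) unfolding C_eq by auto
    show "0 \<le> h^n * B" using der_bound[OF Suc.prems(2)] by linarith
  qed
  finally show ?case unfolding l_def by (simp add: ac_simps)
qed

lemma cell_mean_error:
  fixes j :: int
  defines "C \<equiv> {a + real_of_int j * h .. a + real_of_int (j+1) * h}"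
  shows "\<bar>integral C (hermite_interp k a b N g) - integral C g\<bar> \<le>
    h^(Suc k) * (integral C (\<lambda>y. ((deriv ^^ Suc k) g y)^2) + h) / 2"
proof -
  define B where "B = (integral C (\<lambda>y. (cell_err j (Suc k) y)^2) + h) / 2"
  have cont: "continuous_on C (\<lambda>y. poly (cell_poly g j) y)" by (intro continuous_intros)
  have "integral C (hermite_interp k a b N g) = integral C (\<lambda>y. poly (cell_poly g j) y)"
    by (rule integral_cong) (use interp_deriv_on_cell[of 0 j _ g] in \<open>auto simp: C_def hermite_interp_eq\<close>)
  then have "integral C g - integral C (hermite_interp k a b N g) = integral C (cell_err j 0)"
    unfolding cell_err_def using integrable_continuous_interval[OF cont[unfolded C_def]]
      regular_integrable[OF g] by (simp add: C_def integral_diff)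
  also have "\<bar>\<dots>\<bar> \<le> h^k * B * h"
  proof -
    have "norm (integral C (cell_err j 0)) \<le> h^k * B * (a + real_of_int (j+1) * h - (a + real_of_int j * h))"
      unfolding C_def
      by (rule integral_bound) (use h_pos cell_err_continuous cell_err_bound[where n=k] in \<open>auto simp: B_def C_def\<close>)
    then show ?thesis by (simp add: algebra_simps)
  qed
  also have "\<dots> \<le> h^(Suc k) * (integral C (\<lambda>y. ((deriv ^^ Suc k) g y)^2) + h) / 2"
  proof -
    have "integral C (\<lambda>y. (poly ((pderiv ^^ Suc k) (cell_poly g j)) y)^2) \<ge> 0"
      unfolding C_def by (intro integral_nonneg integrable_continuous_interval continuous_intros) auto
    then have "B \<le> (integral C (\<lambda>y. ((deriv ^^ Suc k) g y)^2) + h) / 2"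
      using cell_pythagoras[of j] unfolding B_def C_def by simp
    then show ?thesis using h_pos by (simp add: mult_left_mono)
  qed
  finally show ?thesis by (simp add: abs_minus_commute)
qed

end

end


section \<open>One step of the scheme\<close>

context periodic_grid
begin

lemma integral_sum_cells:
  fixes F :: "real \<Rightarrow> real"
  assumes "F integrable_on {a..b}"
  shows "integral {a..b} F = (\<Sum>j<N. integral {a + real_of_int (int j) * h .. a + real_of_int (int j + 1) * h} F)"
proof -
  have "integral {a .. a + real n * h} F =
      (\<Sum>j<n. integral {a + real_of_int (int j) * h .. a + real_of_int (int j + 1) * h} F)" if "n \<le> N" for n
    using that
  proof (induction n)
    case (Suc n)
    have "real (Suc n) * h \<le> real N * h" using Suc.prems h_pos by (intro mult_right_mono) auto
    then have "{a .. a + real (Suc n) * h} \<subseteq> {a..b}" using N_times_h by auto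
    then have "integral {a .. a + real n * h} F + integral {a + real n * h .. a + real (Suc n) * h} F =
        integral {a .. a + real (Suc n) * h} F"
      by (intro Henstock_Kurzweil_Integration.integral_combine integrable_on_subinterval[OF assms])
        (use h_pos in auto)
    moreover have "a + real_of_int (int n) * h = a + real n * h"
        "a + real_of_int (int n + 1) * h = a + real (Suc n) * h"
      by (simp_all add: algebra_simps)
    ultimately show ?case using Suc by (simp add: add.commute)
  qed simp
  from this[of N] show ?thesis using N_times_h by simp
qed

lemma energy_hermite_interp_le:
  assumes g: "regular \<sigma> g"
  shows "energy (hermite_interp k a b N g) \<le> energy g"
  unfolding energy_def integral_sum_cells[OF regular_sq_integrable[OF regular_hermite_interp[OF g]]]
    integral_sum_cells[OF regular_sq_integrable[OF g]]
  by (rule sum_mono) (rule cell_energy_le[OF g])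

lemma integral_hermite_interp_error:
  assumes g: "regular \<sigma> g"
  shows "\<bar>integral {a..b} (hermite_interp k a b N g) - integral {a..b} g\<bar> \<le> h^(Suc k) * (energy g + (b - a)) / 2"
proof -
  let ?P = "hermite_interp k a b N g"
  let ?C = "\<lambda>j::nat. {a + real_of_int (int j) * h .. a + real_of_int (int j + 1) * h}"
  have "\<bar>integral {a..b} ?P - integral {a..b} g\<bar> = \<bar>\<Sum>j<N. integral (?C j) ?P - integral (?C j) g\<bar>"
    using regular_integrable[OF regular_hermite_interp[OF g]] regular_integrable[OF g]
    by (simp add: integral_sum_cells sum_subtractf)
  also have "\<dots> \<le> (\<Sum>j<N. \<bar>integral (?C j) ?P - integral (?C j) g\<bar>)" by (rule sum_abs)
  also have "\<dots> \<le> (\<Sum>j<N. h^(Suc k) * (integral (?C j) (\<lambda>y. ((deriv ^^ Suc k) g y)^2) + h) / 2)"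
    by (rule sum_mono) (rule cell_mean_error[OF g])
  also have "\<dots> = h^(Suc k) * (energy g + real N * h) / 2"
    unfolding energy_def integral_sum_cells[OF regular_sq_integrable[OF g]]
    by (simp add: sum_distrib_left sum_divide_distrib[symmetric] sum.distrib algebra_simps)
  finally show ?thesis using N_times_h by simp
qed


section \<open>Sup bounds from energy and mean\<close>

context
  fixes \<sigma> f assumes f: "regular \<sigma> f"
begin

lemma higher_deriv_has_zero:
  assumes "1 \<le> l" "l \<le> k"
  shows "\<exists>z\<in>{a..b}. (deriv ^^ l) f z = 0"
proof -
  have "((deriv ^^ (l - 1)) f has_real_derivative (deriv ^^ l) f x) (at x)" for x
    using f assms unfolding regular_def by (metis Suc_diff_1 Suc_le_eq diff_less less_le_trans zero_less_one)
  moreover have "(deriv ^^ (l - 1)) f b = (deriv ^^ (l - 1)) f a"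
    using regular_periodic_deriv[OF f, of "l - 1" a] by simp
  ultimately show ?thesis using periodic_derivative_has_zero[OF ab] by blast
qed

lemma top_deriv_osc:
  assumes "x \<in> {a..b}" "y \<in> {a..b}"
  shows "\<bar>(deriv ^^ k) f x - (deriv ^^ k) f y\<bar> \<le> (energy f + (b - a)) / 2"
proof -
  let ?G = "\<lambda>z. (((deriv ^^ Suc k) f z)^2 + 1) / 2"
  have ordered: "\<bar>(deriv ^^ k) f x - (deriv ^^ k) f y\<bar> \<le> (energy f + (b - a)) / 2"
    if "y \<le> x" "x \<in> {a..b}" "y \<in> {a..b}" for x y
  proof -
    have "((deriv ^^ Suc k) f has_integral ((deriv ^^ k) f x - (deriv ^^ k) f y)) {y..x}"
    proof (rule off_grid_ftc[OF h_pos that(1)])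
      show "continuous_on {y..x} ((deriv ^^ k) f)"
        using regular_continuous[OF f, of k] continuous_on_subset by blast
    qed (use f in \<open>auto simp: regular_def\<close>)
    then have "\<bar>(deriv ^^ k) f x - (deriv ^^ k) f y\<bar> \<le> integral {y..x} ?G"
      by (rule integral_abs_le_sq[OF _ regular_sq_integrable[OF f]])
    also have "\<dots> \<le> integral {a..b} ?G"
      using that by (intro integral_subset_le integrable_on_divide integrable_add
          regular_sq_integrable[OF f] integrable_const_ivl) auto
    also have "integral {a..b} ?G = (energy f + (b - a)) / 2"
      unfolding energy_def using ab by (intro integral_sq_plus_one_half regular_sq_integrable[OF f]) simp
    finally show ?thesis .
  qed
  show ?thesis
    using ordered[of x y] ordered[of y x] assms by (cases "y \<le> x") (auto simp: abs_minus_commute)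
qed

text \<open>Going down one derivative costs a factor \<open>b - a\<close>: for \<open>l < k\<close>, \<open>f^(l+1)\<close> vanishes
  somewhere, so its sup is bounded by its oscillation, which bounds the oscillation of \<open>f^(l)\<close>.\<close>

lemma higher_deriv_osc:
  assumes "l \<le> k" "x \<in> {a..b}" "y \<in> {a..b}"
  shows "\<bar>(deriv ^^ l) f x - (deriv ^^ l) f y\<bar> \<le> (b - a)^(k - l) * ((energy f + (b - a)) / 2)"
  using assms
proof (induction "k - l" arbitrary: l x y)
  case 0
  then show ?case using top_deriv_osc by simp
next
  case (Suc n)
  define V where "V = (b - a)^(k - Suc l) * ((energy f + (b - a)) / 2)"
  have l: "l < k" "Suc l \<le> k" "k - Suc l = n" using Suc.hyps by auto
  obtain z where z: "z \<in> {a..b}" "(deriv ^^ Suc l) f z = 0"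
    using higher_deriv_has_zero[OF _ l(2)] by auto
  have der_bound: "\<bar>(deriv ^^ Suc l) f t\<bar> \<le> V" if "t \<in> {a..b}" for t
    using Suc.hyps(1)[of "Suc l" t z] l that z unfolding V_def by simp
  have "\<bar>(deriv ^^ l) f x - (deriv ^^ l) f y\<bar> \<le> V * \<bar>x - y\<bar>"
  proof (rule field_differentiable_bound[of "{a..b}", unfolded real_norm_def])
    show "((deriv ^^ l) f has_real_derivative (deriv ^^ Suc l) f t) (at t within {a..b})" for t
      using f l(1) unfolding regular_def by (blast intro: has_field_derivative_at_within)
  qed (use Suc.prems der_bound in auto)
  also have "\<dots> \<le> V * (b - a)"
    using Suc.prems der_bound[OF z(1)] by (intro mult_left_mono) auto
  finally show ?case
    unfolding V_def using l(3) Suc.hyps(2)[symmetric] by (simp add: ac_simps)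
qed

lemma regular_sup_bound:
  assumes "l \<le> k" "x \<in> {a..b}"
  shows "\<bar>(deriv ^^ l) f x\<bar> \<le> max 1 (b - a) ^ k * ((energy f + (b - a)) / 2) + \<bar>integral {a..b} f\<bar> / (b - a)"
proof -
  define V where "V = (energy f + (b - a)) / 2"
  have "0 \<le> V" unfolding V_def using energy_nonneg[OF f] ab by simp
  then have pow: "(b - a)^(k - l) * V \<le> max 1 (b - a) ^ k * V"
    by (intro mult_right_mono order_trans[OF power_mono power_increasing]) (use ab in auto)
  show ?thesis
  proof (cases "l = 0")
    case True
    have "\<bar>f x\<bar> \<le> (b - a)^k * V + \<bar>integral {a..b} f\<bar> / (b - a)"
      using higher_deriv_osc[of 0] regular_continuous[OF f, of 0] assms(2) unfolding V_def
      by (intro abs_le_osc_plus_mean[OF ab]) (auto intro: continuous_on_subset)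
    then show ?thesis using True pow unfolding V_def by simp
  next
    case False
    then obtain z where z: "z \<in> {a..b}" "(deriv ^^ l) f z = 0"
      using higher_deriv_has_zero[OF _ assms(1)] by auto
    have "\<bar>(deriv ^^ l) f x\<bar> \<le> (b - a)^(k - l) * V"
      using higher_deriv_osc[OF assms(1,2) z(1)] z(2) unfolding V_def by simp
    then show ?thesis using pow unfolding V_def by (smt (verit) divide_nonneg_nonneg abs_ge_zero ab)
  qed
qed

end

end


section \<open>Iterating the scheme\<close>

text \<open>The explicit stability constant: \<open>L\<close> is the period, \<open>E\<close> the initial energy, \<open>I\<close> the modulus of
  the initial mean, and \<open>D\<close> a bound for \<open>m h^(k+1)\<close> (at most \<open>T/c\<close> under the time step restriction).\<close>

definition stability_bound :: "nat \<Rightarrow> real \<Rightarrow> real \<Rightarrow> real \<Rightarrow> real \<Rightarrow> real" where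
  "stability_bound k L E I D = max 1 L ^ k * ((E + L) / 2) + (I + D * ((E + L) / 2)) / L + sqrt E"

context periodic_grid
begin

lemma jet_scheme_invariants:
  assumes init: "regular a \<phi>0"
  shows "(\<exists>\<sigma>. regular \<sigma> (jet_scheme k a b N v dt \<phi>0 m)) \<and>
    energy (jet_scheme k a b N v dt \<phi>0 m) \<le> energy \<phi>0 \<and>
    \<bar>integral {a..b} (jet_scheme k a b N v dt \<phi>0 m)\<bar> \<le>
      \<bar>integral {a..b} \<phi>0\<bar> + real m * (h^(Suc k) * (energy \<phi>0 + (b - a)) / 2)"
proof (induction m)
  case (Suc m)
  let ?f = "jet_scheme k a b N v dt \<phi>0 m"
  let ?g = "\<lambda>x. ?f (x - v * dt)"
  from Suc obtain \<sigma> where f: "regular \<sigma> ?f" and Ef: "energy ?f \<le> energy \<phi>0"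
    and If: "\<bar>integral {a..b} ?f\<bar> \<le> \<bar>integral {a..b} \<phi>0\<bar> + real m * (h^(Suc k) * (energy \<phi>0 + (b - a)) / 2)"
    by blast
  have g: "regular (\<sigma> + v * dt) ?g" by (rule regular_shift[OF f])
  have Eg: "energy ?g = energy ?f" by (rule energy_shift[OF f])
  have "h^(Suc k) * (energy ?g + (b - a)) / 2 \<le> h^(Suc k) * (energy \<phi>0 + (b - a)) / 2"
    using Eg Ef h_pos by (simp add: mult_left_mono divide_right_mono)
  then have "\<bar>integral {a..b} (hermite_interp k a b N ?g)\<bar> \<le>
      \<bar>integral {a..b} ?f\<bar> + h^(Suc k) * (energy \<phi>0 + (b - a)) / 2"
    using integral_hermite_interp_error[OF g] integral_shift[OF f, of "v * dt"] by linarith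
  moreover have "real (Suc m) * (h^(Suc k) * (energy \<phi>0 + (b - a)) / 2) =
      real m * (h^(Suc k) * (energy \<phi>0 + (b - a)) / 2) + h^(Suc k) * (energy \<phi>0 + (b - a)) / 2"
    by (simp add: algebra_simps)
  ultimately have "\<bar>integral {a..b} (hermite_interp k a b N ?g)\<bar> \<le>
      \<bar>integral {a..b} \<phi>0\<bar> + real (Suc m) * (h^(Suc k) * (energy \<phi>0 + (b - a)) / 2)"
    using If by linarith
  then show ?case using regular_hermite_interp[OF g] energy_hermite_interp_le[OF g] Eg Ef by auto
qed (use init in auto)

lemma regular_initial:
  assumes "\<forall>x. \<phi>0 (x + (b - a)) = \<phi>0 x"
    and "\<forall>l\<le>k. \<forall>x. ((deriv ^^ l) \<phi>0 has_real_derivative (deriv ^^ Suc l) \<phi>0 x) (at x)"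
    and "continuous_on UNIV ((deriv ^^ Suc k) \<phi>0)"
  shows "regular a \<phi>0"
proof -
  have "continuous_on UNIV ((deriv ^^ k) \<phi>0)"
    using assms(2) by (meson DERIV_isCont continuous_at_imp_continuous_on order_refl)
  then show ?thesis unfolding regular_def using assms by (auto intro: cellwise_cont)
qed

lemma jet_scheme_bounds:
  fixes v dt :: real
  assumes init: "regular a \<phi>0" and steps: "real m * h^(Suc k) \<le> D"
  defines "\<phi> \<equiv> jet_scheme k a b N v dt \<phi>0 m"
    and "M \<equiv> stability_bound k (b - a) (energy \<phi>0) \<bar>integral {a..b} \<phi>0\<bar> D"
  shows "(\<forall>l\<le>k. \<forall>x\<in>{a..b}. \<bar>(deriv ^^ l) \<phi> x\<bar> \<le> M) \<and>
    (\<lambda>x. ((deriv ^^ (k + 1)) \<phi> x)\<^sup>2) integrable_on {a..b} \<and>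
    sqrt (integral {a..b} (\<lambda>x. ((deriv ^^ (k + 1)) \<phi> x)\<^sup>2)) \<le> M"
proof -
  define V0 where "V0 = (energy \<phi>0 + (b - a)) / 2"
  obtain \<sigma> where reg: "regular \<sigma> \<phi>" and E: "energy \<phi> \<le> energy \<phi>0"
    and I: "\<bar>integral {a..b} \<phi>\<bar> \<le> \<bar>integral {a..b} \<phi>0\<bar> + real m * h^(Suc k) * V0"
    using jet_scheme_invariants[OF init, of v dt m] unfolding \<phi>_def V0_def by (auto simp: ac_simps)
  have V0: "V0 \<ge> 0" unfolding V0_def using energy_nonneg[OF init] ab by simp
  have D: "D \<ge> 0" using steps h_pos by (smt (verit) of_nat_0_le_iff mult_nonneg_nonneg zero_le_power)
  have mean: "\<bar>integral {a..b} \<phi>\<bar> \<le> \<bar>integral {a..b} \<phi>0\<bar> + D * V0"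
    using I mult_right_mono[OF steps V0] by linarith
  have sup: "\<bar>(deriv ^^ l) \<phi> x\<bar> \<le> M" if "l \<le> k" "x \<in> {a..b}" for l x
  proof -
    have "\<bar>(deriv ^^ l) \<phi> x\<bar> \<le> max 1 (b - a) ^ k * ((energy \<phi> + (b - a)) / 2) + \<bar>integral {a..b} \<phi>\<bar> / (b - a)"
      by (rule regular_sup_bound[OF reg that])
    also have "\<dots> \<le> max 1 (b - a) ^ k * V0 + (\<bar>integral {a..b} \<phi>0\<bar> + D * V0) / (b - a)"
      using E mean ab unfolding V0_def by (intro add_mono mult_left_mono divide_right_mono) auto
    finally show ?thesis
      unfolding M_def stability_bound_def V0_def using real_sqrt_ge_zero[OF energy_nonneg[OF init]]
      by linarith
  qed
  have "sqrt (energy \<phi>) \<le> M"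
  proof -
    have "0 \<le> max 1 (b - a) ^ k * V0" "0 \<le> (\<bar>integral {a..b} \<phi>0\<bar> + D * V0) / (b - a)"
      using V0 D ab by simp_all
    moreover have "sqrt (energy \<phi>) \<le> sqrt (energy \<phi>0)" using E by simp
    ultimately show ?thesis unfolding M_def stability_bound_def V0_def by linarith
  qed
  then show ?thesis using sup regular_sq_integrable[OF reg] unfolding energy_def by simp
qed

end


theorem mainTheorem9:
  fixes k :: nat and a b v T c :: real and phiIC :: "real \<Rightarrow> real"
  assumes ab: "a < b" and T: "T > 0" and c: "c > 0"
    and periodic: "\<forall>x. phiIC (x + (b - a)) = phiIC x"
    and smooth: "\<forall>l\<le>k. \<forall>x. ((deriv ^^ l) phiIC has_real_derivative (deriv ^^ Suc l) phiIC x) (at x)"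
    and cont: "continuous_on UNIV ((deriv ^^ Suc k) phiIC)"
  shows "\<exists>M. \<forall>N::nat. \<forall>dt::real. N \<ge> 1 \<longrightarrow> dt \<ge> c * ((b - a) / real N) ^ (k + 1) \<longrightarrow>
           (\<forall>m::nat. real m * dt \<le> T \<longrightarrow>
              (\<forall>l\<le>k. \<forall>x\<in>{a..b}. \<bar>(deriv ^^ l) (jet_scheme k a b N v dt phiIC m) x\<bar> \<le> M) \<and>
              (\<lambda>x. ((deriv ^^ (k + 1)) (jet_scheme k a b N v dt phiIC m) x)\<^sup>2) integrable_on {a..b} \<and>
              sqrt (integral {a..b} (\<lambda>x. ((deriv ^^ (k + 1)) (jet_scheme k a b N v dt phiIC m) x)\<^sup>2)) \<le> M)"
proof -
  define E0 where "E0 = integral {a..b} (\<lambda>x. ((deriv ^^ Suc k) phiIC x)^2)"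
  show ?thesis
  proof (intro exI[of _ "stability_bound k (b - a) E0 \<bar>integral {a..b} phiIC\<bar> (T / c)"] allI impI,
      goal_cases)
    case (1 N dt m)
    interpret periodic_grid a b N k using ab 1(1) by unfold_locales
    \<comment> \<open>The time step restriction bounds the number of steps by \<open>T / (c h^(k+1))\<close>.\<close>
    have "c * (real m * h^(Suc k)) \<le> real m * dt"
      using mult_left_mono[OF 1(2), of "real m"] unfolding h_def by (simp add: ac_simps)
    then have "real m * h^(Suc k) \<le> T / c" using 1(3) c by (simp add: field_simps)
    from jet_scheme_bounds[OF regular_initial[OF periodic smooth cont] this]
    show ?case unfolding E0_def energy_def .
  qed
qed

end
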